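(* Let $\{G^k\}$ be a $B$-strongly connected sequence of digraphs on $\{1,\dots,I\}$, let each $\mathbf{A}^k$ be compliant with $G^k$ (constant $\kappa>0$) and column stochastic, and let $\{\mathbf{u}_i^k\}_{k\ge0}\subset\mathbb{R}^m$, $i=1,\dots,I$, be signals. Consider the tracking protocol with $\phi_{(i)}^0=1$, $\mathbf{x}_{(i)}^0=\mathbf{u}_i^0$ and $$\phi_{(i)}^{k+1}=\sum_ja_{ij}^k\phi_{(j)}^k,\quad \mathbf{x}_{(i)}^{k+1}=\frac{1}{\phi_{(i)}^{k+1}}\sum_ja_{ij}^k\phi_{(j)}^k\mathbf{x}_{(j)}^k+\frac{1}{\phi_{(i)}^{k+1}}(\mathbf{u}_i^{k+1}-\mathbf{u}_i^k).$$ Then (a) $\sum_{i=1}^I\phi_{(i)}^k\mathbf{x}_{(i)}^k=\sum_{i=1}^I\mathbf{u}_i^k$ for all $k$; (b) if moreover $\lim_{k\to\infty}\|\mathbf{u}_i^{k+1}-\mathbf{u}_i^k\|=0$ for all $i$, then $\lim_{k\to\infty}\|\mathbf{x}_{(i)}^k-\bar{\mathbf{u}}^k\|=0$ for all $i$, where $\bar{\mathbf{u}}^k\triangleq\frac1I\sum_{i=1}^I\mathbf{u}_i^k$.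
   Context: A digraph at time $k$ is $G^k=(V,E^k)$, $V=\{1,\dots,I\}$, with edge $(j,i)\in E^k$ meaning $j$ can send to $i$. The sequence is $B$-strongly connected if there is an integer $B>0$ such that for every $k$ the digraph with edge set $\bigcup_{t=k}^{k+B-1}E^t$ is strongly connected. $\mathbf{A}^k$ is compliant with $G^k$ (constant $\kappa>0$) if $a_{ij}^k=0$ whenever $j\ne i$ and $(j,i)\notin E^k$, $a_{ij}^k\ge\kappa$ whenever $(j,i)\in E^k$, and $a_{ii}^k\ge\kappa$; it is column stochastic if its entries are nonnegative and $\mathbf{1}^T\mathbf{A}^k=\mathbf{1}^T$. *)

theory Defs
  imports "HOL-Analysis.Analysis"
begin

text \<open>Nodes are V = {1..I}. A time-varying digraph is E :: nat \<Rightarrow> (nat \<times> nat) set;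
  (j,i) \<in> E k means j can send to i at time k.\<close>

definition strongly_connected :: "nat set \<Rightarrow> (nat \<times> nat) set \<Rightarrow> bool" where
  "strongly_connected V F \<longleftrightarrow> (\<forall>i\<in>V. \<forall>j\<in>V. (i, j) \<in> F\<^sup>*)"

definition B_strongly_connected :: "nat \<Rightarrow> nat \<Rightarrow> (nat \<Rightarrow> (nat \<times> nat) set) \<Rightarrow> bool" where
  "B_strongly_connected I B E \<longleftrightarrow>
     B > 0 \<and> (\<forall>k. E k \<subseteq> {1..I} \<times> {1..I}) \<and>
     (\<forall>k. strongly_connected {1..I} (\<Union>t\<in>{k..<k+B}. E t))"

text \<open>A k i j is the entry a_ij^k.\<close>
definition compliant :: "nat \<Rightarrow> real \<Rightarrow> (nat \<times> nat) set \<Rightarrow> (nat \<Rightarrow> nat \<Rightarrow> real) \<Rightarrow> bool" where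
  "compliant I \<kappa> F a \<longleftrightarrow>
     (\<forall>i\<in>{1..I}. \<forall>j\<in>{1..I}. j \<noteq> i \<and> (j, i) \<notin> F \<longrightarrow> a i j = 0) \<and>
     (\<forall>i\<in>{1..I}. \<forall>j\<in>{1..I}. (j, i) \<in> F \<longrightarrow> a i j \<ge> \<kappa>) \<and>
     (\<forall>i\<in>{1..I}. a i i \<ge> \<kappa>)"

definition column_stochastic :: "nat \<Rightarrow> (nat \<Rightarrow> nat \<Rightarrow> real) \<Rightarrow> bool" where
  "column_stochastic I a \<longleftrightarrow>
     (\<forall>i\<in>{1..I}. \<forall>j\<in>{1..I}. a i j \<ge> 0) \<and>
     (\<forall>j\<in>{1..I}. (\<Sum>i=1..I. a i j) = 1)"

primrec phi :: "nat \<Rightarrow> (nat \<Rightarrow> nat \<Rightarrow> nat \<Rightarrow> real) \<Rightarrow> nat \<Rightarrow> nat \<Rightarrow> real" where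
  "phi I A 0 i = 1"
| "phi I A (Suc k) i = (\<Sum>j=1..I. A k i j * phi I A k j)"

primrec track :: "nat \<Rightarrow> (nat \<Rightarrow> nat \<Rightarrow> nat \<Rightarrow> real) \<Rightarrow> (nat \<Rightarrow> nat \<Rightarrow> 'v::real_vector)
    \<Rightarrow> nat \<Rightarrow> nat \<Rightarrow> 'v" where
  "track I A u 0 i = u 0 i"
| "track I A u (Suc k) i =
     (1 / phi I A (Suc k) i) *\<^sub>R (\<Sum>j=1..I. (A k i j * phi I A k j) *\<^sub>R track I A u k j)
     + (1 / phi I A (Suc k) i) *\<^sub>R (u (Suc k) i - u k i)"

end

theory Submission
  imports Defs
begin

text \<open>Let \<open>\<mu>\<^sup>k = (1/I) \<Sum>\<^sub>i u\<^sub>i\<^sup>k\<close> and \<open>W\<^sub>i\<^sup>k = \<phi>\<^sub>i\<^sup>k (x\<^sub>i\<^sup>k - \<mu>\<^sup>k)\<close>. Mass conservation (a) says \<open>\<Sum>\<^sub>i W\<^sub>i\<^sup>k = 0\<close>, and \<open>W\<close> obeys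
  \<open>W\<^sup>k\<^sup>+\<^sup>1 = A\<^sup>k W\<^sup>k + e\<^sup>k\<^sup>+\<^sup>1\<close> with a perturbation controlled by the increments of the signals.
  Column stochastic matrices do not increase the \<open>\<ell>\<^sub>1\<close>-norm, and by \<open>B\<close>-strong connectivity
  every product of \<open>T = I B\<close> consecutive matrices has all entries at least \<open>\<kappa>\<^sup>T\<close>, so on
  zero-sum vectors it contracts the \<open>\<ell>\<^sub>1\<close>-norm by the factor \<open>1 - I \<kappa>\<^sup>T\<close>. Hence
  \<open>\<parallel>W\<^sup>k\<^sup>+\<^sup>T\<parallel>\<^sub>1 \<le> (1 - I \<kappa>\<^sup>T) \<parallel>W\<^sup>k\<parallel>\<^sub>1 + \<epsilon>\<^sub>k\<close> with \<open>\<epsilon>\<^sub>k \<rightarrow> 0\<close>, which forces \<open>W\<^sup>k \<rightarrow> 0\<close>; since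
  also \<open>\<phi>\<^sub>i\<^sup>k \<ge> \<kappa>\<^sup>T\<close> for \<open>k \<ge> T\<close>, this gives \<open>x\<^sub>i\<^sup>k - \<mu>\<^sup>k \<rightarrow> 0\<close>.\<close>

lemma iterated_contraction_bound:
  fixes V :: "nat \<Rightarrow> real"
  assumes "0 < T" "0 \<le> \<rho>" "\<rho> < 1" "0 \<le> \<delta>"
    and step: "\<And>k. K \<le> k \<Longrightarrow> V (k + T) \<le> \<rho> * V k + \<delta>"
    and init: "\<And>k. k \<in> {K..<K+T} \<Longrightarrow> V k \<le> M"
    and "K \<le> k"
  shows "V k \<le> \<rho> ^ ((k - K) div T) * M + \<delta> / (1 - \<rho>)"
  using \<open>K \<le> k\<close>
proof (induction k rule: less_induct)
  case (less k)
  show ?case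
  proof (cases "k < K + T")
    case True
    then have "(k - K) div T = 0" using less.prems by simp
    moreover have "0 \<le> \<delta> / (1 - \<rho>)" using assms by simp
    ultimately show ?thesis using init[of k] True less.prems by simp
  next
    case False
    define k' where "k' = k - T"
    have k': "k = k' + T" "K \<le> k'" "k' < k" using False \<open>0 < T\<close> by (auto simp: k'_def)
    have "k - K = (k' - K) + T" using k' by simp
    then have div: "(k - K) div T = Suc ((k' - K) div T)" using \<open>0 < T\<close> by simp
    have "V k \<le> \<rho> * V k' + \<delta>" using step[of k'] k' by simp
    also have "\<dots> \<le> \<rho> * (\<rho> ^ ((k' - K) div T) * M + \<delta> / (1 - \<rho>)) + \<delta>"
      using less.IH[of k'] k' assms by (simp add: mult_left_mono)
    also have "\<dots> = \<rho> ^ ((k - K) div T) * M + \<delta> / (1 - \<rho>)"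
      using assms unfolding div by (simp add: field_simps)
    finally show ?thesis .
  qed
qed

lemma contraction_perturbed_LIMSEQ_zero:
  fixes V \<epsilon> :: "nat \<Rightarrow> real"
  assumes "0 < T" "\<rho> < 1" and V_nonneg: "\<And>k. 0 \<le> V k"
    and step: "\<And>k. V (k + T) \<le> \<rho> * V k + \<epsilon> k" and "\<epsilon> \<longlonglongrightarrow> 0"
  shows "V \<longlonglongrightarrow> 0"
proof (rule LIMSEQ_I)
  fix r :: real assume "0 < r"
  define \<rho>' where "\<rho>' = max \<rho> 0"
  have \<rho>': "0 \<le> \<rho>'" "\<rho>' < 1" using \<open>\<rho> < 1\<close> by (auto simp: \<rho>'_def)
  have step': "V (k + T) \<le> \<rho>' * V k + \<epsilon> k" for k
    using step[of k] mult_right_mono[OF max.cobounded1 V_nonneg] by (simp add: \<rho>'_def) (smt (verit))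
  define \<delta> where "\<delta> = (1 - \<rho>') * r / 2"
  have "0 < \<delta>" using \<open>0 < r\<close> \<rho>' by (simp add: \<delta>_def)
  obtain K where K: "\<And>k. K \<le> k \<Longrightarrow> \<epsilon> k < \<delta>"
    using LIMSEQ_D[OF \<open>\<epsilon> \<longlonglongrightarrow> 0\<close> \<open>0 < \<delta>\<close>] by fastforce
  define M where "M = Max (V ` {K..<K+T})"
  have bound: "V k \<le> \<rho>' ^ ((k - K) div T) * M + r / 2" if "K \<le> k" for k
  proof -
    have "V k \<le> \<rho>' ^ ((k - K) div T) * M + \<delta> / (1 - \<rho>')"
    proof (rule iterated_contraction_bound[OF \<open>0 < T\<close> \<rho>' _ _ _ that])
      show "V (k + T) \<le> \<rho>' * V k + \<delta>" if "K \<le> k" for k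
        using step'[of k] K[OF that] by simp
    qed (use \<open>0 < \<delta>\<close> in \<open>auto simp: M_def\<close>)
    moreover have "\<delta> / (1 - \<rho>') = r / 2" using \<rho>' by (simp add: \<delta>_def field_simps)
    ultimately show ?thesis by simp
  qed
  have "(\<lambda>n. \<rho>' ^ n * M) \<longlonglongrightarrow> 0"
    using tendsto_mult_left_zero[OF LIMSEQ_power_zero[of \<rho>']] \<rho>' by simp
  then obtain N where N: "\<And>n. N \<le> n \<Longrightarrow> \<rho>' ^ n * M < r / 2"
    using LIMSEQ_D[of _ 0 "r / 2"] \<open>0 < r\<close> by fastforce
  show "\<exists>n0. \<forall>k\<ge>n0. norm (V k - 0) < r"
  proof (intro exI allI impI)
    fix k assume k: "K + N * T \<le> k"
    have "N * T div T \<le> (k - K) div T" using k by (intro div_le_mono) simp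
    then have "N \<le> (k - K) div T" using \<open>0 < T\<close> by simp
    then show "norm (V k - 0) < r" using bound[of k] N k V_nonneg[of k] by fastforce
  qed
qed

lemma sum_norm_stochastic_mix_le:
  fixes M :: "nat \<Rightarrow> nat \<Rightarrow> real" and v :: "nat \<Rightarrow> 'v::real_normed_vector"
  assumes entries: "\<And>i j. i \<in> N \<Longrightarrow> j \<in> N \<Longrightarrow> \<eta> \<le> M i j"
    and col_sum: "\<And>j. j \<in> N \<Longrightarrow> (\<Sum>i\<in>N. M i j) = 1"
    and mass: "\<eta> *\<^sub>R (\<Sum>j\<in>N. v j) = 0"
  shows "(\<Sum>i\<in>N. norm (\<Sum>j\<in>N. M i j *\<^sub>R v j)) \<le> (1 - real (card N) * \<eta>) * (\<Sum>j\<in>N. norm (v j))"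
proof -
  \<comment> \<open>as \<open>\<eta> \<Sum> v = 0\<close>, we may replace \<open>M\<close> by \<open>M - \<eta>\<close>, whose column sums are \<open>1 - |N| \<eta>\<close>\<close>
  have shift: "(\<Sum>j\<in>N. M i j *\<^sub>R v j) = (\<Sum>j\<in>N. (M i j - \<eta>) *\<^sub>R v j)" for i
    using mass by (simp add: scaleR_left_diff_distrib sum_subtractf scaleR_right.sum)
  have "(\<Sum>i\<in>N. norm (\<Sum>j\<in>N. M i j *\<^sub>R v j)) \<le> (\<Sum>i\<in>N. \<Sum>j\<in>N. (M i j - \<eta>) * norm (v j))"
  proof (rule sum_mono)
    fix i assume "i \<in> N"
    have "norm (\<Sum>j\<in>N. M i j *\<^sub>R v j) \<le> (\<Sum>j\<in>N. norm ((M i j - \<eta>) *\<^sub>R v j))"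
      unfolding shift by (rule norm_sum)
    also have "\<dots> = (\<Sum>j\<in>N. (M i j - \<eta>) * norm (v j))"
      using entries \<open>i \<in> N\<close> by (intro sum.cong) auto
    finally show "norm (\<Sum>j\<in>N. M i j *\<^sub>R v j) \<le> \<dots>" .
  qed
  also have "\<dots> = (\<Sum>j\<in>N. (\<Sum>i\<in>N. M i j - \<eta>) * norm (v j))"
    by (subst sum.swap) (simp add: sum_distrib_right)
  also have "\<dots> = (1 - real (card N) * \<eta>) * (\<Sum>j\<in>N. norm (v j))"
    using col_sum by (simp add: sum_subtractf sum_distrib_left)
  finally show ?thesis .
qed

lemma rtrancl_leaves_set:
  assumes "(a, b) \<in> F\<^sup>*" "a \<in> X" "b \<notin> X"
  obtains x y where "(x, y) \<in> F" "x \<in> X" "y \<notin> X"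
  using assms by (induction rule: rtrancl_induct) auto

primrec transition :: "nat \<Rightarrow> (nat \<Rightarrow> nat \<Rightarrow> nat \<Rightarrow> real) \<Rightarrow> nat \<Rightarrow> nat \<Rightarrow> nat \<Rightarrow> nat \<Rightarrow> real" where
  "transition I A s 0 i j = (if i = j then 1 else 0)"
| "transition I A s (Suc n) i j = (\<Sum>l=1..I. A (s + n) i l * transition I A s n l j)"

locale column_stochastic_seq =
  fixes I :: nat and A :: "nat \<Rightarrow> nat \<Rightarrow> nat \<Rightarrow> real"
  assumes column_stochastic: "\<And>k. column_stochastic I (A k)"
begin

abbreviation "P \<equiv> transition I A"

lemma A_nonneg: "i \<in> {1..I} \<Longrightarrow> j \<in> {1..I} \<Longrightarrow> 0 \<le> A k i j"
  using column_stochastic[of k] unfolding column_stochastic_def by auto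

lemma sum_A_column: "j \<in> {1..I} \<Longrightarrow> (\<Sum>i=1..I. A k i j) = 1"
  using column_stochastic[of k] unfolding column_stochastic_def by auto

lemma sum_A_column_weighted:
  fixes x :: "nat \<Rightarrow> 'v::real_vector"
  shows "(\<Sum>i=1..I. \<Sum>j=1..I. A k i j *\<^sub>R x j) = (\<Sum>j=1..I. x j)"
proof -
  have "(\<Sum>i=1..I. \<Sum>j=1..I. A k i j *\<^sub>R x j) = (\<Sum>j=1..I. (\<Sum>i=1..I. A k i j) *\<^sub>R x j)"
    by (subst sum.swap) (simp add: scaleR_sum_left)
  also have "\<dots> = (\<Sum>j=1..I. x j)"
    by (intro sum.cong refl) (metis sum_A_column scaleR_one)
  finally show ?thesis .
qed

lemma transition_nonneg: "i \<in> {1..I} \<Longrightarrow> j \<in> {1..I} \<Longrightarrow> 0 \<le> P s n i j"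
  by (induction n arbitrary: i) (auto intro!: sum_nonneg mult_nonneg_nonneg A_nonneg)

lemma sum_transition_column: "j \<in> {1..I} \<Longrightarrow> (\<Sum>i=1..I. P s n i j) = 1"
proof (induction n)
  case (Suc n)
  have "(\<Sum>i=1..I. P s (Suc n) i j) = (\<Sum>i=1..I. \<Sum>l=1..I. A (s + n) i l *\<^sub>R P s n l j)"
    by simp
  also have "\<dots> = (\<Sum>l=1..I. P s n l j)"
    by (rule sum_A_column_weighted)
  finally show ?case using Suc by simp
qed simp

lemma transition_0_apply:
  fixes x :: "nat \<Rightarrow> 'v::real_vector"
  assumes "i \<in> {1..I}"
  shows "(\<Sum>j=1..I. P s 0 i j *\<^sub>R x j) = x i"
proof -
  have "(\<Sum>j=1..I. P s 0 i j *\<^sub>R x j) = (\<Sum>j\<in>{1..I}. if i = j then x j else 0)"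
    by (intro sum.cong) auto
  then show ?thesis using assms by simp
qed

lemma transition_Suc_apply:
  fixes x :: "nat \<Rightarrow> 'v::real_vector"
  shows "(\<Sum>j=1..I. P s (Suc n) i j *\<^sub>R x j) = (\<Sum>l=1..I. A (s + n) i l *\<^sub>R (\<Sum>j=1..I. P s n l j *\<^sub>R x j))"
proof -
  have "(\<Sum>j=1..I. P s (Suc n) i j *\<^sub>R x j) = (\<Sum>j=1..I. \<Sum>l=1..I. (A (s + n) i l * P s n l j) *\<^sub>R x j)"
    by (simp only: transition.simps scaleR_sum_left)
  also have "\<dots> = (\<Sum>l=1..I. \<Sum>j=1..I. (A (s + n) i l * P s n l j) *\<^sub>R x j)"
    by (rule sum.swap)
  finally show ?thesis by (simp add: scaleR_sum_right)
qed

lemma phi_sum: "(\<Sum>i=1..I. phi I A k i) = real I"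
proof (induction k)
  case (Suc k)
  have "(\<Sum>i=1..I. phi I A (Suc k) i) = (\<Sum>i=1..I. \<Sum>j=1..I. A k i j *\<^sub>R phi I A k j)"
    by simp
  also have "\<dots> = real I"
    using Suc by (simp only: sum_A_column_weighted)
  finally show ?case .
qed simp

lemma phi_transition: "i \<in> {1..I} \<Longrightarrow> phi I A (s + n) i = (\<Sum>j=1..I. P s n i j * phi I A s j)"
proof (induction n arbitrary: i)
  case 0
  then show ?case using transition_0_apply[of i s "phi I A s"] by simp
next
  case (Suc n)
  then show ?case using transition_Suc_apply[of s n i "phi I A s"] by simp
qed

lemma sum_norm_perturbed_iteration_le:
  fixes x e :: "nat \<Rightarrow> nat \<Rightarrow> 'v::real_normed_vector"
  assumes iter: "\<And>k i. i \<in> {1..I} \<Longrightarrow> x (Suc k) i = (\<Sum>j=1..I. A k i j *\<^sub>R x k j) + e k i"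
  shows "(\<Sum>i=1..I. norm (x (s + n) i - (\<Sum>j=1..I. P s n i j *\<^sub>R x s j)))
          \<le> (\<Sum>t<n. \<Sum>i=1..I. norm (e (s + t) i))"
proof (induction n)
  case 0
  have "(\<Sum>i=1..I. norm (x (s + 0) i - (\<Sum>j=1..I. P s 0 i j *\<^sub>R x s j))) = 0"
    by (intro sum.neutral ballI) (simp only: transition_0_apply add_0_right diff_self norm_zero)
  then show ?case by simp
next
  case (Suc n)
  define d where "d l = x (s + n) l - (\<Sum>j=1..I. P s n l j *\<^sub>R x s j)" for l
  have "x (s + Suc n) i - (\<Sum>j=1..I. P s (Suc n) i j *\<^sub>R x s j)
      = (\<Sum>l=1..I. A (s + n) i l *\<^sub>R d l) + e (s + n) i" if "i \<in> {1..I}" for i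
    unfolding transition_Suc_apply d_def using iter[OF that, of "s + n"]
    by (simp add: scaleR_right_diff_distrib sum_subtractf)
  then have "(\<Sum>i=1..I. norm (x (s + Suc n) i - (\<Sum>j=1..I. P s (Suc n) i j *\<^sub>R x s j)))
      \<le> (\<Sum>i=1..I. norm (\<Sum>l=1..I. A (s + n) i l *\<^sub>R d l)) + (\<Sum>i=1..I. norm (e (s + n) i))"
    by (simp add: sum.distrib[symmetric] norm_triangle_ineq sum_mono)
  also have "(\<Sum>i=1..I. norm (\<Sum>l=1..I. A (s + n) i l *\<^sub>R d l)) \<le> (\<Sum>l=1..I. norm (d l))"
    using sum_norm_stochastic_mix_le[of "{1..I}" 0 "A (s + n)" d] A_nonneg sum_A_column by simp
  also have "(\<Sum>l=1..I. norm (d l)) \<le> (\<Sum>t<n. \<Sum>i=1..I. norm (e (s + t) i))"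
    using Suc.IH unfolding d_def by simp
  finally show ?case by simp
qed

end

locale B_connected_compliant_seq = column_stochastic_seq +
  fixes B :: nat and \<kappa> :: real and E :: "nat \<Rightarrow> (nat \<times> nat) set"
  assumes B_strongly_connected: "B_strongly_connected I B E" and kappa_pos: "0 < \<kappa>"
    and compliant: "\<And>k. compliant I \<kappa> (E k) (A k)"
begin

lemma A_diag_ge: "i \<in> {1..I} \<Longrightarrow> \<kappa> \<le> A k i i"
  using compliant[of k] unfolding compliant_def by auto

lemma A_edge_ge: "i \<in> {1..I} \<Longrightarrow> j \<in> {1..I} \<Longrightarrow> (j, i) \<in> E k \<Longrightarrow> \<kappa> \<le> A k i j"
  using compliant[of k] unfolding compliant_def by auto

lemma B_pos: "0 < B"
  using B_strongly_connected unfolding B_strongly_connected_def by auto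

lemma edges_subset: "E k \<subseteq> {1..I} \<times> {1..I}"
  using B_strongly_connected unfolding B_strongly_connected_def by auto

lemma window_strongly_connected: "strongly_connected {1..I} (\<Union>t\<in>{k..<k+B}. E t)"
  using B_strongly_connected unfolding B_strongly_connected_def by auto

lemma phi_pos: "i \<in> {1..I} \<Longrightarrow> 0 < phi I A k i"
proof (induction k arbitrary: i)
  case (Suc k)
  have "0 < A k i i * phi I A k i" using Suc kappa_pos A_diag_ge[OF Suc.prems, of k] by simp
  also have "\<dots> \<le> (\<Sum>j=1..I. A k i j * phi I A k j)"
  proof (rule member_le_sum)
    fix j assume "j \<in> {1..I} - {i}"
    then show "0 \<le> A k i j * phi I A k j"
      using Suc.IH[of j] Suc.prems A_nonneg[of i j k] by simp
  qed (use Suc.prems in auto)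
  finally show ?case by simp
qed simp

lemma phi_nonneg: "i \<in> {1..I} \<Longrightarrow> 0 \<le> phi I A k i"
  using phi_pos less_imp_le by blast

lemma phi_le: "i \<in> {1..I} \<Longrightarrow> phi I A k i \<le> real I"
  using member_le_sum[of i "{1..I}" "phi I A k"] phi_nonneg phi_sum by simp

text \<open>The nodes that node \<open>j\<close> has reached with weight at least \<open>\<kappa>\<^sup>n\<close> after \<open>n\<close> steps;
  self-loops keep them reached, and every window of \<open>B\<close> steps adds a new one.\<close>

definition reach :: "nat \<Rightarrow> nat \<Rightarrow> nat \<Rightarrow> nat set" where
  "reach s n j = {i \<in> {1..I}. \<kappa> ^ n \<le> P s n i j}"

lemma reach_subset: "reach s n j \<subseteq> {1..I}"
  unfolding reach_def by auto

lemma reach_Suc: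
  assumes "i \<in> reach s n j" "j \<in> {1..I}" "i' \<in> {1..I}" "(i, i') \<in> E (s + n) \<or> i' = i"
  shows "i' \<in> reach s (Suc n) j"
proof -
  have i: "i \<in> {1..I}" and "\<kappa> ^ n \<le> P s n i j" using assms(1) unfolding reach_def by auto
  moreover have "\<kappa> \<le> A (s + n) i' i"
    using assms(4) A_edge_ge[OF assms(3) i] A_diag_ge[OF assms(3)] by auto
  ultimately have "\<kappa> ^ Suc n \<le> A (s + n) i' i * P s n i j"
    using kappa_pos by (simp add: mult_mono)
  also have "\<dots> \<le> (\<Sum>l=1..I. A (s + n) i' l * P s n l j)"
    using i assms by (intro member_le_sum) (auto intro!: mult_nonneg_nonneg A_nonneg transition_nonneg)
  finally show ?thesis using assms(3) unfolding reach_def by simp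
qed

lemma reach_mono: "n \<le> m \<Longrightarrow> j \<in> {1..I} \<Longrightarrow> reach s n j \<subseteq> reach s m j"
proof (induction m rule: dec_induct)
  case (step m)
  then show ?case using reach_Suc reach_subset by blast
qed simp

lemma reach_self: "j \<in> {1..I} \<Longrightarrow> j \<in> reach s n j"
  using reach_mono[of 0 n j s] unfolding reach_def by auto

lemma reach_grows:
  assumes j: "j \<in> {1..I}" and "reach s n j \<noteq> {1..I}"
  obtains y where "y \<notin> reach s n j" "y \<in> reach s (n + B) j"
proof -
  obtain b where b: "b \<in> {1..I}" "b \<notin> reach s n j" using assms reach_subset by blast
  have "(j, b) \<in> (\<Union>t\<in>{s+n..<s+n+B}. E t)\<^sup>*"
    using window_strongly_connected[of "s + n"] j b unfolding strongly_connected_def by auto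
  then obtain x y where xy: "(x, y) \<in> (\<Union>t\<in>{s+n..<s+n+B}. E t)" "x \<in> reach s n j" "y \<notin> reach s n j"
    using reach_self[OF j] b(2) by (rule rtrancl_leaves_set)
  then obtain t where t: "t \<in> {s+n..<s+n+B}" "(x, y) \<in> E t" by auto
  have y: "y \<in> {1..I}" using t edges_subset[of t] by blast
  have "n \<le> t - s" using t by auto
  then have "x \<in> reach s (t - s) j" using reach_mono[of n "t - s" j s] xy j by auto
  then have "y \<in> reach s (Suc (t - s)) j" using reach_Suc[of x s "t - s" j y] t y j by simp
  moreover have "reach s (Suc (t - s)) j \<subseteq> reach s (n + B) j" using t j by (intro reach_mono) auto
  ultimately show ?thesis using that xy(3) by blast
qed

lemma card_reach: "j \<in> {1..I} \<Longrightarrow> reach s (m * B) j = {1..I} \<or> m + 1 \<le> card (reach s (m * B) j)"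
proof (induction m)
  case 0
  then have "reach s 0 j \<noteq> {}" using reach_self by blast
  then show ?case using finite_subset[OF reach_subset] by (simp add: card_gt_0_iff Suc_le_eq)
next
  case (Suc m)
  have grow: "reach s (m * B) j \<subseteq> reach s (Suc m * B) j" using Suc.prems by (intro reach_mono) auto
  show ?case
  proof (cases "reach s (m * B) j = {1..I}")
    case True
    then show ?thesis using grow reach_subset by blast
  next
    case False
    then obtain y where y: "y \<notin> reach s (m * B) j" "y \<in> reach s (Suc m * B) j"
      using reach_grows[OF Suc.prems] by (metis add.commute mult_Suc)
    have "finite (reach s (Suc m * B) j)" using finite_subset[OF reach_subset] by simp
    then have "card (insert y (reach s (m * B) j)) \<le> card (reach s (Suc m * B) j)"
      using y grow by (intro card_mono) auto
    then show ?thesis using Suc False y(1) finite_subset[OF reach_subset] by simp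
  qed
qed

lemma reach_full: "j \<in> {1..I} \<Longrightarrow> reach s (I * B) j = {1..I}"
  using card_reach[of j s I] card_mono[OF _ reach_subset, of s "I * B" j] by fastforce

lemma transition_lower_bound:
  "i \<in> {1..I} \<Longrightarrow> j \<in> {1..I} \<Longrightarrow> \<kappa> ^ (I * B) \<le> P s (I * B) i j"
  using reach_full[of j s] unfolding reach_def by blast

lemma phi_lower_bound:
  assumes "I * B \<le> k" "i \<in> {1..I}"
  shows "\<kappa> ^ (I * B) \<le> phi I A k i"
proof -
  define s where "s = k - I * B"
  have "\<kappa> ^ (I * B) \<le> \<kappa> ^ (I * B) * real I" using assms kappa_pos by simp
  also have "\<dots> = (\<Sum>j=1..I. \<kappa> ^ (I * B) * phi I A s j)"
    unfolding sum_distrib_left[symmetric] phi_sum by simp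
  also have "\<dots> \<le> (\<Sum>j=1..I. P s (I * B) i j * phi I A s j)"
    using assms by (intro sum_mono mult_right_mono transition_lower_bound) (auto simp: phi_nonneg)
  also have "\<dots> = phi I A k i" using phi_transition[OF assms(2), of s "I * B"] assms by (simp add: s_def)
  finally show ?thesis .
qed

lemma phi_track_Suc:
  fixes u :: "nat \<Rightarrow> nat \<Rightarrow> 'v::real_vector"
  assumes "i \<in> {1..I}"
  shows "phi I A (Suc k) i *\<^sub>R track I A u (Suc k) i
     = (\<Sum>j=1..I. A k i j *\<^sub>R (phi I A k j *\<^sub>R track I A u k j)) + (u (Suc k) i - u k i)"
  using phi_pos[OF assms, of "Suc k"]
  by (simp only: track.simps scaleR_right_distrib scaleR_scaleR) (simp add: scaleR_scaleR)

theorem sum_phi_track: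
  fixes u :: "nat \<Rightarrow> nat \<Rightarrow> 'v::real_vector"
  shows "(\<Sum>i=1..I. phi I A k i *\<^sub>R track I A u k i) = (\<Sum>i=1..I. u k i)"
proof (induction k)
  case (Suc k)
  have "(\<Sum>i=1..I. phi I A (Suc k) i *\<^sub>R track I A u (Suc k) i)
     = (\<Sum>i=1..I. (\<Sum>j=1..I. A k i j *\<^sub>R (phi I A k j *\<^sub>R track I A u k j)) + (u (Suc k) i - u k i))"
    by (intro sum.cong refl phi_track_Suc)
  also have "\<dots> = (\<Sum>i=1..I. \<Sum>j=1..I. A k i j *\<^sub>R (phi I A k j *\<^sub>R track I A u k j))
       + ((\<Sum>i=1..I. u (Suc k) i) - (\<Sum>i=1..I. u k i))"
    by (simp only: sum.distrib sum_subtractf)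
  also have "\<dots> = (\<Sum>i=1..I. u (Suc k) i)"
    using Suc by (simp only: sum_A_column_weighted) simp
  finally show ?case .
qed simp

text \<open>\<open>deviation u k i\<close> is \<open>W\<^sub>i\<^sup>k\<close> and \<open>perturbation u k i\<close> is \<open>e\<^sub>i\<^sup>k\<^sup>+\<^sup>1\<close>.\<close>

definition deviation :: "(nat \<Rightarrow> nat \<Rightarrow> 'v::real_normed_vector) \<Rightarrow> nat \<Rightarrow> nat \<Rightarrow> 'v" where
  "deviation u k i = phi I A k i *\<^sub>R (track I A u k i - (1 / real I) *\<^sub>R (\<Sum>j=1..I. u k j))"

definition perturbation :: "(nat \<Rightarrow> nat \<Rightarrow> 'v::real_normed_vector) \<Rightarrow> nat \<Rightarrow> nat \<Rightarrow> 'v" where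
  "perturbation u k i = (u (Suc k) i - u k i)
     - (phi I A (Suc k) i / real I) *\<^sub>R (\<Sum>j=1..I. u (Suc k) j - u k j)"

lemma deviation_Suc:
  assumes "i \<in> {1..I}"
  shows "deviation u (Suc k) i = (\<Sum>j=1..I. A k i j *\<^sub>R deviation u k j) + perturbation u k i"
proof -
  define S where "S k = (\<Sum>j=1..I. u k j)" for k
  define Z where "Z = (\<Sum>j=1..I. A k i j *\<^sub>R (phi I A k j *\<^sub>R track I A u k j))"
  define c where "c = phi I A (Suc k) i / real I"
  have "(\<Sum>j=1..I. A k i j *\<^sub>R deviation u k j)
      = Z - (\<Sum>j=1..I. A k i j * phi I A k j / real I) *\<^sub>R S k"
    by (simp add: deviation_def Z_def S_def scaleR_right_diff_distrib sum_subtractf scaleR_sum_left)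
  also have "(\<Sum>j=1..I. A k i j * phi I A k j / real I) = c"
    by (simp add: c_def sum_divide_distrib)
  finally have mix: "(\<Sum>j=1..I. A k i j *\<^sub>R deviation u k j) = Z - c *\<^sub>R S k" .
  have deviation: "deviation u (Suc k) i = Z + (u (Suc k) i - u k i) - c *\<^sub>R S (Suc k)"
    unfolding deviation_def scaleR_right_diff_distrib phi_track_Suc[OF assms] Z_def c_def S_def
    by simp
  have perturbation: "perturbation u k i = (u (Suc k) i - u k i) - c *\<^sub>R (S (Suc k) - S k)"
    by (simp add: perturbation_def c_def S_def sum_subtractf)
  show ?thesis unfolding mix deviation perturbation by (simp add: algebra_simps)
qed

lemma sum_deviation: "(\<Sum>i=1..I. deviation u k i) = 0"
proof (cases "I = 0")
  case False
  have "(\<Sum>i=1..I. deviation u k i)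
      = (\<Sum>i=1..I. u k i) - ((\<Sum>i=1..I. phi I A k i) / real I) *\<^sub>R (\<Sum>j=1..I. u k j)"
    unfolding deviation_def scaleR_right_diff_distrib scaleR_scaleR sum_subtractf sum_phi_track
    by (simp add: scaleR_sum_left sum_divide_distrib)
  then show ?thesis using False phi_sum[of k] by simp
qed simp

lemma norm_perturbation_le:
  assumes "i \<in> {1..I}"
  shows "norm (perturbation u k i) \<le> 2 * (\<Sum>j=1..I. norm (u (Suc k) j - u k j))"
proof -
  define c where "c = phi I A (Suc k) i / real I"
  have "0 \<le> c" "c \<le> 1"
    using phi_nonneg[OF assms] phi_le[OF assms] assms
    by (auto simp del: phi.simps simp: c_def divide_le_eq_1)
  have "norm (perturbation u k i)
      \<le> norm (u (Suc k) i - u k i) + norm (c *\<^sub>R (\<Sum>j=1..I. u (Suc k) j - u k j))"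
    unfolding perturbation_def c_def by (rule norm_triangle_ineq4)
  also have "norm (u (Suc k) i - u k i) \<le> (\<Sum>j=1..I. norm (u (Suc k) j - u k j))"
    using assms by (intro member_le_sum) auto
  also have "norm (c *\<^sub>R (\<Sum>j=1..I. u (Suc k) j - u k j)) \<le> norm (\<Sum>j=1..I. u (Suc k) j - u k j)"
    using \<open>0 \<le> c\<close> \<open>c \<le> 1\<close> by (simp add: mult_left_le_one_le)
  also have "\<dots> \<le> (\<Sum>j=1..I. norm (u (Suc k) j - u k j))"
    by (rule norm_sum)
  finally show ?thesis by simp
qed

lemma perturbation_tendsto_zero:
  assumes "\<forall>j\<in>{1..I}. (\<lambda>k. norm (u (Suc k) j - u k j)) \<longlonglongrightarrow> 0" and "i \<in> {1..I}"
  shows "(\<lambda>k. norm (perturbation u k i)) \<longlonglongrightarrow> 0"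
proof (rule Lim_null_comparison)
  show "\<forall>\<^sub>F k in sequentially. norm (norm (perturbation u k i)) \<le> 2 * (\<Sum>j=1..I. norm (u (Suc k) j - u k j))"
    by (intro always_eventually allI) (use norm_perturbation_le[OF assms(2)] in simp)
  show "(\<lambda>k. 2 * (\<Sum>j=1..I. norm (u (Suc k) j - u k j))) \<longlonglongrightarrow> 0"
    using assms(1) by (intro tendsto_mult_right_zero tendsto_null_sum) auto
qed

lemma sum_norm_deviation_contraction:
  "(\<Sum>i=1..I. norm (deviation u (k + I * B) i))
     \<le> (1 - real I * \<kappa> ^ (I * B)) * (\<Sum>i=1..I. norm (deviation u k i))
       + (\<Sum>t<I * B. \<Sum>i=1..I. norm (perturbation u (k + t) i))"
proof -
  define y where "y i = (\<Sum>j=1..I. P k (I * B) i j *\<^sub>R deviation u k j)" for i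
  have "(\<Sum>i=1..I. norm (deviation u (k + I * B) i - y i))
      \<le> (\<Sum>t<I * B. \<Sum>i=1..I. norm (perturbation u (k + t) i))"
    unfolding y_def by (rule sum_norm_perturbed_iteration_le[OF deviation_Suc])
  moreover have "(\<Sum>i=1..I. norm (y i)) \<le> (1 - real I * \<kappa> ^ (I * B)) * (\<Sum>i=1..I. norm (deviation u k i))"
    using sum_norm_stochastic_mix_le[of "{1..I}" "\<kappa> ^ (I * B)" "P k (I * B)" "deviation u k"]
      sum_deviation[of u k] transition_lower_bound sum_transition_column
    unfolding y_def by simp
  moreover have "(\<Sum>i=1..I. norm (deviation u (k + I * B) i))
      \<le> (\<Sum>i=1..I. norm (y i)) + (\<Sum>i=1..I. norm (deviation u (k + I * B) i - y i))"
    by (simp add: sum.distrib[symmetric] sum_mono norm_triangle_sub)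
  ultimately show ?thesis by simp
qed

theorem track_tendsto_average:
  assumes increments: "\<forall>j\<in>{1..I}. (\<lambda>k. norm (u (Suc k) j - u k j)) \<longlonglongrightarrow> 0" and i: "i \<in> {1..I}"
  shows "(\<lambda>k. norm (track I A u k i - (1 / real I) *\<^sub>R (\<Sum>j=1..I. u k j))) \<longlonglongrightarrow> 0"
proof -
  define \<eta> where "\<eta> = \<kappa> ^ (I * B)"
  define V where "V k = (\<Sum>i=1..I. norm (deviation u k i))" for k
  have "0 < \<eta>" using kappa_pos by (simp add: \<eta>_def)
  have V: "V \<longlonglongrightarrow> 0"
  proof (rule contraction_perturbed_LIMSEQ_zero)
    show "0 < I * B" using i B_pos by simp
    show "1 - real I * \<eta> < 1" using i \<open>0 < \<eta>\<close> by simp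
    show "(\<lambda>k. \<Sum>t<I * B. \<Sum>i=1..I. norm (perturbation u (k + t) i)) \<longlonglongrightarrow> 0"
      using perturbation_tendsto_zero[OF increments]
      by (intro tendsto_null_sum) (auto dest: LIMSEQ_ignore_initial_segment)
    show "V (k + I * B) \<le> (1 - real I * \<eta>) * V k + (\<Sum>t<I * B. \<Sum>i=1..I. norm (perturbation u (k + t) i))"
      for k unfolding V_def \<eta>_def by (rule sum_norm_deviation_contraction)
  qed (simp add: V_def sum_nonneg)
  have bound: "norm (track I A u k i - (1 / real I) *\<^sub>R (\<Sum>j=1..I. u k j)) \<le> V k / \<eta>"
    if "I * B \<le> k" for k
  proof -
    let ?d = "norm (track I A u k i - (1 / real I) *\<^sub>R (\<Sum>j=1..I. u k j))"
    have "\<eta> * ?d \<le> phi I A k i * ?d"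
      using phi_lower_bound[OF that i] unfolding \<eta>_def by (rule mult_right_mono) simp
    also have "\<dots> = norm (deviation u k i)"
      using phi_nonneg[OF i] by (simp add: deviation_def)
    also have "\<dots> \<le> V k"
      unfolding V_def using i by (intro member_le_sum) auto
    finally show ?thesis using \<open>0 < \<eta>\<close> by (simp add: pos_le_divide_eq ac_simps)
  qed
  show ?thesis
  proof (rule Lim_null_comparison)
    show "\<forall>\<^sub>F k in sequentially. norm (norm (track I A u k i - (1 / real I) *\<^sub>R (\<Sum>j=1..I. u k j))) \<le> V k / \<eta>"
      using bound by (auto simp: eventually_sequentially)
    show "(\<lambda>k. V k / \<eta>) \<longlonglongrightarrow> 0"
      using tendsto_divide_zero[OF V] by simp
  qed
qed

end

theorem mainTheorem13:
  fixes I B :: nat and \<kappa> :: real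
    and E :: "nat \<Rightarrow> (nat \<times> nat) set"
    and A :: "nat \<Rightarrow> nat \<Rightarrow> nat \<Rightarrow> real"
    and u :: "nat \<Rightarrow> nat \<Rightarrow> real ^ 'm"
  assumes "B_strongly_connected I B E"
    and "\<kappa> > 0"
    and "\<And>k. compliant I \<kappa> (E k) (A k)"
    and "\<And>k. column_stochastic I (A k)"
  shows "(\<forall>k. (\<Sum>i=1..I. phi I A k i *\<^sub>R track I A u k i) = (\<Sum>i=1..I. u k i))
       \<and> ((\<forall>i\<in>{1..I}. (\<lambda>k. norm (u (Suc k) i - u k i)) \<longlonglongrightarrow> 0) \<longrightarrow>
          (\<forall>i\<in>{1..I}. (\<lambda>k. norm (track I A u k i - (1 / real I) *\<^sub>R (\<Sum>j=1..I. u k j))) \<longlonglongrightarrow> 0))"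
proof -
  interpret B_connected_compliant_seq I A B \<kappa> E
    by unfold_locales (use assms in auto)
  show ?thesis
    using sum_phi_track track_tendsto_average by blast
qed

end
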